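(* Let $m \geq 0$, $n \geq 1$ be integers. Consider the following algorithm with input a stable configuration $c = (c^t; c^b)$ on $K_{m,n}^0$: (1) replace $c^b$ by its non-decreasing rearrangement $(\tilde c^b_1, \ldots, \tilde c^b_n)$, computed by counting sort (using that all entries lie in $\{0, \ldots, m\}$); (2) compute $k_j := |\{ i \in \{1,\ldots,m\} : c^t_i < j\}|$ for $j = 1, \ldots, n$ by first counting, for each $0 \le \ell \le n-1$, the number $k'_\ell$ of indices $i$ with $c^t_i = \ell$, and then taking prefix sums $k_j = k'_0 + \cdots + k'_{j-1}$; (3) set $\mathrm{sumK} = \mathrm{sumC} = 0$, and for $j = 1, \ldots, n$ update $\mathrm{sumK} \gets \mathrm{sumK} + k_j$, $\mathrm{sumC} \gets \mathrm{sumC} + \tilde c^b_j$, and return False if $\mathrm{sumC} < \mathrm{sumK}$; (4) if the loop completes, return True. Then this algorithm returns True if and only if $c$ is stochastically recurrent, and it runs in $O(m+n)$ time.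
   Context: $K_{m,n}^0$ is the complete bipartite graph with "top" vertices $v^t_0, v^t_1, \ldots, v^t_m$ and "bottom" vertices $v^b_1, \ldots, v^b_n$, with an edge between every top vertex and every bottom vertex; $v^t_0$ is called the sink. A configuration is a vector $c = (c^t_1, \ldots, c^t_m; c^b_1, \ldots, c^b_n)$ of non-negative integers ($c^*_i$ = number of grains at $v^*_i$). A non-sink vertex is stable if its number of grains is less than its degree, i.e. $c^t_i < n$, resp. $c^b_j < m+1$; $c$ is stable if all non-sink vertices are stable. Stochastic sandpile model (SSM) with a fixed parameter $p \in (0,1)$: an unstable vertex topples as follows: for each of its neighbours (for a bottom vertex this includes the sink), independently (and independently of all previous topplings), with probability $p$ it sends one grain to that neighbour, and otherwise keeps that grain; grains sent to the sink disappear. Starting from any configuration and repeatedly toppling unstable vertices, one reaches a (random) stable configuration whose law does not depend on the toppling order. Consider the Markov chain on stable configurations which at each step adds a grain to a non-sink vertex chosen uniformly at random and then stabilises according to the SSM. A stable configuration is stochastically recurrent if it is a recurrent state of this Markov chain (appears infinitely often in its long-time running). *)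

theory Defs
  imports Main "HOL.Real"
begin

text \<open>Configurations on K_{m,n}^0 (sink excluded): a pair (ct, cb) of lists,
  ct ! i = grains at top vertex v^t_{i+1} (i < m), cb ! j = grains at bottom
  vertex v^b_{j+1} (j < n).\<close>

type_synonym config = "nat list \<times> nat list"

definition config_of :: "nat \<Rightarrow> nat \<Rightarrow> config \<Rightarrow> bool" where
  "config_of m n c \<longleftrightarrow> length (fst c) = m \<and> length (snd c) = n"

text \<open>Top vertices have degree n, bottom vertices have degree m+1.\<close>
definition stable_config :: "nat \<Rightarrow> nat \<Rightarrow> config \<Rightarrow> bool" where
  "stable_config m n c \<longleftrightarrow> config_of m n c \<and>
     (\<forall>i<m. fst c ! i < n) \<and> (\<forall>j<n. snd c ! j < m + 1)"

text \<open>One stochastic toppling of an unstable vertex, with a possible outcome: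
  the set S of neighbours (and, for a bottom vertex, whether the sink) that
  receive a grain; such an outcome has probability p^|sent| (1-p)^(deg-|sent|).
  The relation holds iff c' is an outcome of positive probability.\<close>
definition topple_top :: "real \<Rightarrow> nat \<Rightarrow> nat \<Rightarrow> config \<Rightarrow> config \<Rightarrow> bool" where
  "topple_top p m n c c' \<longleftrightarrow> config_of m n c \<and>
     (\<exists>i<m. fst c ! i \<ge> n \<and> (\<exists>S \<subseteq> {..<n}.
        p ^ card S * (1 - p) ^ (n - card S) > 0 \<and>
        c' = (map (\<lambda>k. if k = i then fst c ! k - card S else fst c ! k) [0..<m],
              map (\<lambda>j. if j \<in> S then snd c ! j + 1 else snd c ! j) [0..<n])))"

definition topple_bot :: "real \<Rightarrow> nat \<Rightarrow> nat \<Rightarrow> config \<Rightarrow> config \<Rightarrow> bool" where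
  "topple_bot p m n c c' \<longleftrightarrow> config_of m n c \<and>
     (\<exists>j<n. snd c ! j \<ge> m + 1 \<and> (\<exists>S \<subseteq> {..<m}. \<exists>s::bool.
        (let tot = card S + (if s then 1 else 0) in
          p ^ tot * (1 - p) ^ (m + 1 - tot) > 0 \<and>
          c' = (map (\<lambda>k. if k \<in> S then fst c ! k + 1 else fst c ! k) [0..<m],
                map (\<lambda>l. if l = j then snd c ! l - tot else snd c ! l) [0..<n]))))"

definition topple :: "real \<Rightarrow> nat \<Rightarrow> nat \<Rightarrow> config \<Rightarrow> config \<Rightarrow> bool" where
  "topple p m n c c' \<longleftrightarrow> topple_top p m n c c' \<or> topple_bot p m n c c'"

text \<open>Support of the (order-independent) law of the SSM stabilisation of d.\<close>
definition stabilises_to :: "real \<Rightarrow> nat \<Rightarrow> nat \<Rightarrow> config \<Rightarrow> config \<Rightarrow> bool" where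
  "stabilises_to p m n d c' \<longleftrightarrow> (topple p m n)\<^sup>*\<^sup>* d c' \<and> stable_config m n c'"

text \<open>Add a grain to non-sink vertex v: v < m is top vertex v, m \<le> v < m+n is
  bottom vertex v - m.\<close>
definition add_grain :: "nat \<Rightarrow> nat \<Rightarrow> nat \<Rightarrow> config \<Rightarrow> config" where
  "add_grain m n v c = (if v < m then ((fst c)[v := fst c ! v + 1], snd c)
                        else (fst c, (snd c)[v - m := snd c ! (v - m) + 1]))"

text \<open>Positive-probability transitions of the Markov chain on stable configurations
  (each non-sink vertex is chosen with probability 1/(m+n) > 0).\<close>
definition chain_step :: "real \<Rightarrow> nat \<Rightarrow> nat \<Rightarrow> config \<Rightarrow> config \<Rightarrow> bool" where
  "chain_step p m n c c' \<longleftrightarrow> stable_config m n c \<and>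
     (\<exists>v < m + n. stabilises_to p m n (add_grain m n v c) c')"

text \<open>Recurrent state of a finite-state Markov chain: every state reachable from c
  can reach c back.\<close>
definition stoch_recurrent :: "real \<Rightarrow> nat \<Rightarrow> nat \<Rightarrow> config \<Rightarrow> bool" where
  "stoch_recurrent p m n c \<longleftrightarrow> stable_config m n c \<and>
     (\<forall>d. (chain_step p m n)\<^sup>*\<^sup>* c d \<longrightarrow> (chain_step p m n)\<^sup>*\<^sup>* d c)"

section \<open>The algorithm, with an elementary-step counter (second component)\<close>

fun count_loop :: "nat list \<Rightarrow> nat list \<Rightarrow> nat list \<times> nat" where
  "count_loop cnt [] = (cnt, 0)"
| "count_loop cnt (x # xs) =
     (let (r, t) = count_loop (cnt[x := cnt ! x + 1]) xs in (r, Suc t))"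

definition counting :: "nat \<Rightarrow> nat list \<Rightarrow> nat list \<times> nat" where
  "counting K xs = (let (cnt, t) = count_loop (replicate K 0) xs in (cnt, K + t))"

fun emit :: "nat \<Rightarrow> nat list \<Rightarrow> nat list \<times> nat" where
  "emit v [] = ([], 0)"
| "emit v (k # ks) = (let (r, t) = emit (Suc v) ks in (replicate k v @ r, Suc k + t))"

definition counting_sort :: "nat \<Rightarrow> nat list \<Rightarrow> nat list \<times> nat" where
  "counting_sort m xs = (let (cnt, t1) = counting (m + 1) xs; (r, t2) = emit 0 cnt
                         in (r, t1 + t2))"

fun prefix_sums :: "nat \<Rightarrow> nat list \<Rightarrow> nat list \<times> nat" where
  "prefix_sums acc [] = ([], 0)"
| "prefix_sums acc (x # xs) =
     (let (r, t) = prefix_sums (acc + x) xs in ((acc + x) # r, Suc t))"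

fun check_loop :: "nat \<Rightarrow> nat \<Rightarrow> nat list \<Rightarrow> nat list \<Rightarrow> bool \<times> nat" where
  "check_loop sumK sumC (k # ks) (c # cs) =
     (let sK = sumK + k; sC = sumC + c in
       if sC < sK then (False, 1)
       else (let (r, t) = check_loop sK sC ks cs in (r, Suc t)))"
| "check_loop sumK sumC _ _ = (True, 1)"

definition ssm_algorithm :: "nat \<Rightarrow> nat \<Rightarrow> config \<Rightarrow> bool \<times> nat" where
  "ssm_algorithm m n c =
     (let (sb, t1) = counting_sort m (snd c);
          (kp, t2) = counting n (fst c);
          (ks, t3) = prefix_sums 0 kp;
          (res, t4) = check_loop 0 0 ks sb
      in (res, t1 + t2 + t3 + t4))"

end

(* A stable configuration c is recurrent iff it satisfies the rectangle condition
   |P| |Q| <= c(P) + c(Q) for every set P of top and Q of bottom vertices.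
   The condition survives adding grains and every stochastic toppling, and it holds for the
   maximal stable configuration, which every stable configuration reaches by adding grains;
   so recurrent configurations satisfy it.  Conversely, a greedy Gale-Ryser argument turns
   the condition into a bipartite relation M whose degree configuration lies below c, and
   a single avalanche started from the maximal configuration ends exactly in that degree
   configuration; adding grains then leads to c.
   For |Q| = J the binding P consists of the tops with fewer than J grains and the binding Q
   of the J poorest bottoms, so the condition is the prefix-sum test of the algorithm. *)

theory Submission
  imports Defs "HOL-Combinatorics.List_Permutation"
begin

section \<open>Correctness and cost of the algorithm\<close>

lemma count_loop_eq:
  assumes "\<forall>x\<in>set xs. x < length cnt"
  shows "count_loop cnt xs = (map (\<lambda>l. cnt ! l + count_list xs l) [0..<length cnt], length xs)"
  using assms
proof (induction xs arbitrary: cnt)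
  case Nil
  show ?case by (simp add: map_nth)
next
  case (Cons x xs)
  then show ?case by (auto simp: nth_list_update)
qed

lemma counting_eq:
  "\<forall>x\<in>set xs. x < K \<Longrightarrow> counting K xs = (map (count_list xs) [0..<K], K + length xs)"
  by (simp add: counting_def count_loop_eq)

lemma emit_time: "snd (emit v ks) = length (fst (emit v ks)) + length ks"
  by (induction ks arbitrary: v) (auto simp: case_prod_beta)

lemma count_emit:
  "count (mset (fst (emit v ks))) x = (if v \<le> x \<and> x < v + length ks then ks ! (x - v) else 0)"
proof (induction ks arbitrary: v)
  case Nil
  show ?case by simp
next
  case (Cons k ks)
  then show ?case
    by (auto simp: case_prod_beta count_replicate_mset nth_Cons' split: if_splits)
qed

lemma sorted_emit: "sorted (fst (emit v ks)) \<and> (\<forall>y\<in>set (fst (emit v ks)). v \<le> y)"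
  by (induction ks arbitrary: v) (fastforce simp: case_prod_beta sorted_append)+

lemma counting_sort_eq:
  assumes "\<forall>x\<in>set xs. x \<le> m"
  shows "counting_sort m xs = (sort xs, 2 * (m + 1) + 2 * length xs)"
proof -
  let ?cnt = "map (count_list xs) [0..<m + 1]"
  have cnt: "counting (m + 1) xs = (?cnt, m + 1 + length xs)"
    using assms by (simp add: counting_eq less_Suc_eq_le del: upt_Suc)
  have "mset (fst (emit 0 ?cnt)) = mset xs"
  proof (rule multiset_eqI)
    fix x
    show "count (mset (fst (emit 0 ?cnt))) x = count (mset xs) x"
      unfolding count_emit using assms
      by (auto simp: count_mset count_list_0_iff simp del: upt_Suc)
  qed
  then have "sort xs = fst (emit 0 ?cnt)"
    using sorted_emit by (intro properties_for_sort) auto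
  moreover have "length (fst (emit 0 ?cnt)) = length xs"
    using \<open>mset _ = mset xs\<close> by (metis size_mset)
  ultimately show ?thesis
    using cnt by (simp add: counting_sort_def emit_time case_prod_beta del: upt_Suc)
qed

lemma prefix_sums_eq:
  "prefix_sums acc xs = (map (\<lambda>l. acc + sum_list (take (Suc l) xs)) [0..<length xs], length xs)"
  by (induction xs arbitrary: acc) (simp_all add: map_upt_Suc add.assoc del: upt_Suc)

lemma check_loop_result:
  "length ks = length cs \<Longrightarrow> fst (check_loop sK sC ks cs) \<longleftrightarrow>
     (\<forall>j<length ks. sK + sum_list (take (Suc j) ks) \<le> sC + sum_list (take (Suc j) cs))"
proof (induction sK sC ks cs rule: check_loop.induct)
  case (1 sK sC k ks c cs)
  then show ?case
    by (cases "sC + c < sK + k") (auto simp: Let_def case_prod_beta All_less_Suc2 add.assoc)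
qed auto

lemma check_loop_time: "snd (check_loop sK sC ks cs) \<le> length ks + 1"
  by (induction sK sC ks cs rule: check_loop.induct) (auto simp: Let_def case_prod_beta)

lemma sum_list_take_conv_sum: "J \<le> length xs \<Longrightarrow> sum_list (take J xs) = (\<Sum>l<J. xs ! l)"
  by (simp add: sum_list_sum_nth atLeast0LessThan min_absorb2)

lemma sum_count_list_lessThan:
  fixes xs :: "nat list"
  shows "(\<Sum>v<L. count_list xs v) = length (filter (\<lambda>x. x < L) xs)"
proof (induction xs)
  case Nil
  show ?case by simp
next
  case (Cons x xs)
  have "(\<Sum>v<L. count_list (x # xs) v) = (\<Sum>v<L. count_list xs v + (if x = v then 1 else 0))"
    by (intro sum.cong) auto
  then show ?case using Cons by (simp add: sum.distrib)
qed

lemma sum_length_filter_le: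
  fixes xs :: "nat list"
  shows "(\<Sum>l<J. length (filter (\<lambda>x. x \<le> l) xs)) = (\<Sum>x\<leftarrow>xs. J - x)"
proof (induction xs)
  case Nil
  show ?case by simp
next
  case (Cons x xs)
  have "length (filter (\<lambda>x. x \<le> l) (x # xs)) = of_bool (x \<le> l) + length (filter (\<lambda>x. x \<le> l) xs)"
    for l by simp
  moreover have "(\<Sum>l<J. of_bool (x \<le> l) :: nat) = card {x..<J}"
    by (simp add: sum.If_cases lessThan_def Int_def conj_commute atLeastLessThan_def atLeast_def)
  ultimately show ?case using Cons by (simp add: sum.distrib)
qed

lemma sum_take_prefix_sums_counts:
  fixes xs :: "nat list"
  assumes "J \<le> n"
  shows "sum_list (take J (map (\<lambda>l. sum_list (take (Suc l) (map (count_list xs) [0..<n]))) [0..<n]))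
           = (\<Sum>x\<leftarrow>xs. J - x)"
proof -
  define ks where "ks = map (\<lambda>l. sum_list (take (Suc l) (map (count_list xs) [0..<n]))) [0..<n]"
  have "ks ! l = length (filter (\<lambda>x. x \<le> l) xs)" if "l < n" for l
  proof -
    have "ks ! l = (\<Sum>v<Suc l. count_list xs v)"
      using that by (simp add: ks_def sum_list_take_conv_sum del: upt_Suc)
    then show ?thesis
      by (simp only: sum_count_list_lessThan less_Suc_eq_le)
  qed
  then have "sum_list (take J ks) = (\<Sum>l<J. length (filter (\<lambda>x. x \<le> l) xs))"
    using assms by (simp add: sum_list_take_conv_sum ks_def del: upt_Suc)
  then show ?thesis
    by (simp add: ks_def sum_length_filter_le del: upt_Suc)
qed

text \<open>With truncated subtraction, \<open>\<Sum>i<m. J - c\<^sup>t\<^sub>i\<close> is the value \<open>k\<^sub>1 + \<dots> + k\<^sub>J\<close> of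
  sumK after J rounds.\<close>
lemma fst_ssm_algorithm_iff:
  assumes "stable_config m n c"
  shows "fst (ssm_algorithm m n c) \<longleftrightarrow> (\<forall>J\<le>n. (\<Sum>i<m. J - fst c ! i) \<le> (\<Sum>l<J. sort (snd c) ! l))"
proof -
  obtain ct cb where c: "c = (ct, cb)" by fastforce
  have len: "length ct = m" "length cb = n" and ct: "\<forall>x\<in>set ct. x < n"
    and cb: "\<forall>x\<in>set cb. x \<le> m"
    using assms by (auto simp: c stable_config_def config_of_def in_set_conv_nth less_Suc_eq_le)
  define ks where "ks = map (\<lambda>l. sum_list (take (Suc l) (map (count_list ct) [0..<n]))) [0..<n]"
  have "sum_list (take J ks) = (\<Sum>i<m. J - ct ! i)" if "J \<le> n" for J
    using sum_take_prefix_sums_counts[OF that, of ct] len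
    by (simp add: ks_def sum_list_sum_nth atLeast0LessThan del: upt_Suc)
  moreover have "sum_list (take J (sort cb)) = (\<Sum>l<J. sort cb ! l)" if "J \<le> n" for J
    using that len by (simp add: sum_list_take_conv_sum)
  moreover have "fst (ssm_algorithm m n c) \<longleftrightarrow>
      (\<forall>j<n. sum_list (take (Suc j) ks) \<le> sum_list (take (Suc j) (sort cb)))"
    using ct cb len
    by (simp add: ssm_algorithm_def c counting_sort_eq counting_eq prefix_sums_eq check_loop_result
        case_prod_beta ks_def del: upt_Suc)
  moreover have "(\<forall>J\<le>n. Q J) \<longleftrightarrow> (\<forall>j<n. Q (Suc j))" if "Q 0" for Q
    using that by (metis Suc_le_eq not0_implies_Suc not_less_eq_eq)
  ultimately show ?thesis
    by (simp add: c del: sum.lessThan_Suc)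
qed

lemma snd_ssm_algorithm_le:
  assumes "stable_config m n c"
  shows "snd (ssm_algorithm m n c) \<le> 3 * m + 5 * n + 3"
proof -
  obtain ct cb where c: "c = (ct, cb)" by fastforce
  have len: "length ct = m" "length cb = n" and "\<forall>x\<in>set ct. x < n" "\<forall>x\<in>set cb. x \<le> m"
    using assms by (auto simp: c stable_config_def config_of_def in_set_conv_nth less_Suc_eq_le)
  then show ?thesis
    using check_loop_time[of 0 0 "fst (prefix_sums 0 (map (count_list ct) [0..<n]))" "sort cb"]
    by (simp add: ssm_algorithm_def c counting_sort_eq counting_eq prefix_sums_eq case_prod_beta
        del: upt_Suc)
qed

section \<open>The rectangle condition\<close>

definition rectangle_condition :: "'a set \<Rightarrow> 'b set \<Rightarrow> ('a \<Rightarrow> nat) \<Rightarrow> ('b \<Rightarrow> nat) \<Rightarrow> bool" where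
  "rectangle_condition U V x y \<longleftrightarrow> (\<forall>P\<subseteq>U. \<forall>Q\<subseteq>V. card P * card Q \<le> sum x P + sum y Q)"

definition config_rectangle_condition :: "nat \<Rightarrow> nat \<Rightarrow> config \<Rightarrow> bool" where
  "config_rectangle_condition m n c \<longleftrightarrow>
     rectangle_condition {..<m} {..<n} ((!) (fst c)) ((!) (snd c))"

lemma card_mult_le_iff_deficit:
  assumes "finite U"
  shows "(\<forall>P\<subseteq>U. card P * k \<le> sum x P + \<beta>) \<longleftrightarrow> (\<Sum>i\<in>U. k - x i) \<le> \<beta>"
proof
  assume H: "\<forall>P\<subseteq>U. card P * k \<le> sum x P + \<beta>"
  define P where "P = {i\<in>U. x i < k}"
  have "(\<Sum>i\<in>U. k - x i) = (\<Sum>i\<in>P. k - x i)"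
    using assms by (intro sum.mono_neutral_right) (auto simp: P_def)
  also have "\<dots> + sum x P = card P * k"
    by (simp add: P_def flip: sum.distrib)
  also have "\<dots> \<le> sum x P + \<beta>"
    using H by (simp add: P_def)
  finally show "(\<Sum>i\<in>U. k - x i) \<le> \<beta>" by simp
next
  assume deficit: "(\<Sum>i\<in>U. k - x i) \<le> \<beta>"
  show "\<forall>P\<subseteq>U. card P * k \<le> sum x P + \<beta>"
  proof (intro allI impI)
    fix P assume "P \<subseteq> U"
    have "card P * k = (\<Sum>i\<in>P. k)"
      by simp
    also have "\<dots> \<le> (\<Sum>i\<in>P. x i + (k - x i))"
      by (intro sum_mono) simp
    also have "\<dots> \<le> sum x P + (\<Sum>i\<in>U. k - x i)"
      using assms \<open>P \<subseteq> U\<close> by (simp add: sum.distrib sum_mono2)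
    finally show "card P * k \<le> sum x P + \<beta>"
      using deficit by linarith
  qed
qed

lemma rectangle_condition_iff_deficit:
  assumes "finite U"
  shows "rectangle_condition U V x y \<longleftrightarrow> (\<forall>Q\<subseteq>V. (\<Sum>i\<in>U. card Q - x i) \<le> sum y Q)"
proof -
  have "rectangle_condition U V x y \<longleftrightarrow> (\<forall>Q\<subseteq>V. \<forall>P\<subseteq>U. card P * card Q \<le> sum x P + sum y Q)"
    unfolding rectangle_condition_def by blast
  then show ?thesis
    by (simp only: card_mult_le_iff_deficit[OF assms])
qed

lemma sum_prefix_le_sum_subset:
  fixes zs :: "nat list"
  assumes "sorted zs" "K \<subseteq> {..<length zs}"
  shows "(\<Sum>l<card K. zs ! l) \<le> (\<Sum>k\<in>K. zs ! k)"
proof (cases "card K = 0")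
  case False
  define A where "A = {..<card K}"
  define z where "z = zs ! (card K - 1)"
  have "finite K" using assms(2) finite_subset by blast
  have "card K \<le> length zs"
    using card_mono[OF finite_lessThan assms(2)] by simp
  have below: "zs ! k \<le> z" if "k \<in> A" for k
    unfolding z_def using that False \<open>card K \<le> length zs\<close>
    by (intro sorted_nth_mono[OF assms(1)]) (auto simp: A_def)
  have above: "z \<le> zs ! k" if "k \<in> K - A" for k
    unfolding z_def using that assms(2)
    by (intro sorted_nth_mono[OF assms(1)]) (auto simp: A_def)
  have "finite A" "card A = card K"
    by (simp_all add: A_def)
  moreover have "card (A \<inter> K) = card (K \<inter> A)"
    by (simp add: Int_commute)
  ultimately have card_eq: "card (A - K) = card (K - A)"
    using card_Int_Diff[of A K] card_Int_Diff[OF \<open>finite K\<close>, of A] by linarith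
  have "(\<Sum>k\<in>A - K. zs ! k) \<le> (\<Sum>k\<in>A - K. z)"
    using below by (intro sum_mono) simp
  also have "\<dots> = (\<Sum>k\<in>K - A. z)"
    by (simp only: sum_constant card_eq)
  also have "\<dots> \<le> (\<Sum>k\<in>K - A. zs ! k)"
    using above by (intro sum_mono) simp
  finally have "(\<Sum>k\<in>A - K. zs ! k) \<le> (\<Sum>k\<in>K - A. zs ! k)" .
  moreover have "(\<Sum>l\<in>A. zs ! l) = (\<Sum>k\<in>A \<inter> K. zs ! k) + (\<Sum>k\<in>A - K. zs ! k)"
    by (rule sum.Int_Diff) (simp add: A_def)
  moreover have "(\<Sum>k\<in>K. zs ! k) = (\<Sum>k\<in>K \<inter> A. zs ! k) + (\<Sum>k\<in>K - A. zs ! k)"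
    using \<open>finite K\<close> by (rule sum.Int_Diff)
  ultimately show ?thesis
    by (simp add: A_def Int_commute)
qed simp

lemma subset_sum_permute:
  assumes "mset xs = mset ys" "Q \<subseteq> {..<length xs}"
  shows "\<exists>K\<subseteq>{..<length ys}. card K = card Q \<and> (\<Sum>k\<in>K. ys ! k) = (\<Sum>j\<in>Q. xs ! j)"
proof -
  obtain f where f: "bij_betw f {..<length xs} {..<length ys}" "\<forall>i<length xs. xs ! i = ys ! f i"
    using permutation_Ex_bij assms(1) by blast
  have "inj_on f Q"
    using f(1) assms(2) bij_betw_imp_inj_on inj_on_subset by blast
  moreover have "f ` Q \<subseteq> {..<length ys}"
    using bij_betwE[OF f(1)] assms(2) by auto
  moreover have "(\<Sum>j\<in>Q. ys ! f j) = (\<Sum>j\<in>Q. xs ! j)"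
    using f(2) assms(2) by (intro sum.cong) auto
  ultimately show ?thesis
    by (intro exI[of _ "f ` Q"]) (simp add: card_image sum.reindex)
qed

lemma subset_sums_ge_iff_sorted_prefixes:
  fixes ys :: "nat list"
  shows "(\<forall>Q\<subseteq>{..<length ys}. F (card Q) \<le> (\<Sum>j\<in>Q. ys ! j)) \<longleftrightarrow>
           (\<forall>J\<le>length ys. F J \<le> (\<Sum>l<J. sort ys ! l))"
proof
  assume H: "\<forall>Q\<subseteq>{..<length ys}. F (card Q) \<le> (\<Sum>j\<in>Q. ys ! j)"
  show "\<forall>J\<le>length ys. F J \<le> (\<Sum>l<J. sort ys ! l)"
  proof (intro allI impI)
    fix J assume "J \<le> length ys"
    then obtain Q where "Q \<subseteq> {..<length ys}" "card Q = J" "(\<Sum>j\<in>Q. ys ! j) = (\<Sum>l<J. sort ys ! l)"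
      using subset_sum_permute[of "sort ys" ys "{..<J}"] by auto
    then show "F J \<le> (\<Sum>l<J. sort ys ! l)" using H by metis
  qed
next
  assume H: "\<forall>J\<le>length ys. F J \<le> (\<Sum>l<J. sort ys ! l)"
  show "\<forall>Q\<subseteq>{..<length ys}. F (card Q) \<le> (\<Sum>j\<in>Q. ys ! j)"
  proof (intro allI impI)
    fix Q assume Q: "Q \<subseteq> {..<length ys}"
    then obtain K where K: "K \<subseteq> {..<length ys}" "card K = card Q"
      "(\<Sum>k\<in>K. sort ys ! k) = (\<Sum>j\<in>Q. ys ! j)"
      using subset_sum_permute[of ys "sort ys" Q] by auto
    have "card Q \<le> length ys"
      using card_mono[OF finite_lessThan Q] by simp
    then have "F (card Q) \<le> (\<Sum>l<card K. sort ys ! l)"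
      using H K(2) by simp
    also have "\<dots> \<le> (\<Sum>j\<in>Q. ys ! j)"
      using sum_prefix_le_sum_subset[of "sort ys" K] K by simp
    finally show "F (card Q) \<le> (\<Sum>j\<in>Q. ys ! j)" .
  qed
qed

lemma ssm_algorithm_iff_rectangle_condition:
  assumes "stable_config m n c"
  shows "fst (ssm_algorithm m n c) \<longleftrightarrow> config_rectangle_condition m n c"
proof -
  have "length (snd c) = n"
    using assms by (simp add: stable_config_def config_of_def)
  then show ?thesis
    using subset_sums_ge_iff_sorted_prefixes[where F = "\<lambda>J. \<Sum>i<m. J - fst c ! i" and ys = "snd c"]
    by (simp add: fst_ssm_algorithm_iff[OF assms] config_rectangle_condition_def
        rectangle_condition_iff_deficit)
qed

section \<open>Invariance of the rectangle condition under the chain\<close>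

lemma rectangle_condition_mono:
  assumes "rectangle_condition U V x y" "\<forall>i\<in>U. x i \<le> x' i" "\<forall>j\<in>V. y j \<le> y' j"
  shows "rectangle_condition U V x' y'"
  unfolding rectangle_condition_def
proof (intro allI impI)
  fix P Q assume "P \<subseteq> U" "Q \<subseteq> V"
  then have "card P * card Q \<le> sum x P + sum y Q" "sum x P \<le> sum x' P" "sum y Q \<le> sum y' Q"
    using assms by (auto simp: rectangle_condition_def intro!: sum_mono)
  then show "card P * card Q \<le> sum x' P + sum y' Q" by linarith
qed

lemma rectangle_condition_swap: "rectangle_condition U V x y \<longleftrightarrow> rectangle_condition V U y x"
  unfolding rectangle_condition_def by (metis add.commute mult.commute)

lemma sum_if_increment:
  fixes y :: "'a \<Rightarrow> nat"
  assumes "finite Q"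
  shows "(\<Sum>j\<in>Q. if j \<in> S then y j + 1 else y j) = sum y Q + card (Q \<inter> S)"
proof -
  have "(\<Sum>j\<in>Q. if j \<in> S then y j + 1 else y j) = (\<Sum>j\<in>Q. y j + (if j \<in> S then 1 else 0))"
    by (intro sum.cong) auto
  then show ?thesis
    using assms by (simp add: sum.distrib sum.If_cases Int_def)
qed

text \<open>Only rectangles containing i lose grains, and the loss is covered because
  \<open>|Q| + |S| \<le> |V| + |Q \<inter> S|\<close>.\<close>
lemma rectangle_condition_topple:
  assumes rc: "rectangle_condition U V x y" and "finite U" "finite V"
    and "i \<in> U" "S \<subseteq> V" and enough: "card V + l \<le> x i"
  shows "rectangle_condition U V (x(i := x i - (card S + l))) (\<lambda>j. if j \<in> S then y j + 1 else y j)"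
  unfolding rectangle_condition_def
proof (intro allI impI)
  fix P Q assume P: "P \<subseteq> U" and Q: "Q \<subseteq> V"
  let ?x' = "x(i := x i - (card S + l))"
  have "finite P" "finite Q" "finite S"
    using P Q \<open>S \<subseteq> V\<close> assms(2,3) by (auto intro: finite_subset)
  have y': "(\<Sum>j\<in>Q. if j \<in> S then y j + 1 else y j) = sum y Q + card (Q \<inter> S)"
    using \<open>finite Q\<close> by (rule sum_if_increment)
  show "card P * card Q \<le> sum ?x' P + (\<Sum>j\<in>Q. if j \<in> S then y j + 1 else y j)"
  proof (cases "i \<in> P")
    case False
    then have "sum ?x' P = sum x P"
      by (intro sum.cong) auto
    moreover have "card P * card Q \<le> sum x P + sum y Q"
      using rc P Q unfolding rectangle_condition_def by blast
    ultimately show ?thesis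
      using y' by linarith
  next
    case True
    have "sum ?x' (P - {i}) = sum x (P - {i})"
      by (intro sum.cong) auto
    then have "sum ?x' P = sum x (P - {i}) + (x i - (card S + l))"
      using sum.remove[OF \<open>finite P\<close> True, of ?x'] by simp
    moreover have "card P * card Q = card (P - {i}) * card Q + card Q"
      using card.remove[OF \<open>finite P\<close> True] by simp
    moreover have "card (P - {i}) * card Q \<le> sum x (P - {i}) + sum y Q"
      using rc P Q unfolding rectangle_condition_def by blast
    moreover have "card (Q \<union> S) \<le> card V"
      using Q \<open>S \<subseteq> V\<close> assms(3) by (intro card_mono) auto
    then have "card Q + card S \<le> card V + card (Q \<inter> S)"
      using card_Un_Int[OF \<open>finite Q\<close> \<open>finite S\<close>] by linarith
    ultimately show ?thesis
      using y' enough by linarith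
  qed
qed

lemma topple_preserves_rectangle_condition:
  assumes "topple p m n c c'" "config_rectangle_condition m n c"
  shows "config_rectangle_condition m n c'"
  using assms(1) unfolding topple_def
proof
  assume "topple_top p m n c c'"
  then obtain i S where "i < m" "n \<le> fst c ! i" "S \<subseteq> {..<n}"
    and c': "c' = (map (\<lambda>k. if k = i then fst c ! k - card S else fst c ! k) [0..<m],
                   map (\<lambda>j. if j \<in> S then snd c ! j + 1 else snd c ! j) [0..<n])"
    unfolding topple_top_def by blast
  have "rectangle_condition {..<m} {..<n} (((!) (fst c))(i := fst c ! i - (card S + 0)))
          (\<lambda>j. if j \<in> S then snd c ! j + 1 else snd c ! j)"
    using assms(2) \<open>i < m\<close> \<open>n \<le> fst c ! i\<close> \<open>S \<subseteq> {..<n}\<close>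
    by (intro rectangle_condition_topple) (simp_all add: config_rectangle_condition_def)
  then show ?thesis
    unfolding config_rectangle_condition_def c' by (rule rectangle_condition_mono) auto
next
  assume "topple_bot p m n c c'"
  \<comment> \<open>the transposed situation, with the grain sent to the sink as extra loss\<close>
  then obtain j S s where "j < n" "m + 1 \<le> snd c ! j" "S \<subseteq> {..<m}"
    and c': "c' = (map (\<lambda>k. if k \<in> S then fst c ! k + 1 else fst c ! k) [0..<m],
                   map (\<lambda>l. if l = j then snd c ! l - (card S + (if s then 1 else 0))
                            else snd c ! l) [0..<n])"
    unfolding topple_bot_def Let_def by blast
  have "rectangle_condition {..<n} {..<m}
          (((!) (snd c))(j := snd c ! j - (card S + (if s then 1 else 0))))
          (\<lambda>k. if k \<in> S then fst c ! k + 1 else fst c ! k)"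
    using assms(2) \<open>j < n\<close> \<open>m + 1 \<le> snd c ! j\<close> \<open>S \<subseteq> {..<m}\<close>
    by (intro rectangle_condition_topple)
      (auto simp: config_rectangle_condition_def rectangle_condition_swap[of "{..<m}"])
  then show ?thesis
    unfolding config_rectangle_condition_def c' rectangle_condition_swap[of "{..<m}"]
    by (rule rectangle_condition_mono) auto
qed

lemma nth_le_nth_increment: "xs ! j \<le> xs[k := Suc (xs ! k)] ! j"
  for xs :: "nat list"
  by (cases "k < length xs") (auto simp: nth_list_update list_update_beyond)

lemma add_grain_preserves_rectangle_condition:
  "config_rectangle_condition m n c \<Longrightarrow> config_rectangle_condition m n (add_grain m n v c)"
  unfolding config_rectangle_condition_def
  by (erule rectangle_condition_mono) (simp_all add: add_grain_def nth_le_nth_increment)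

lemma chain_step_preserves_rectangle_condition:
  assumes "chain_step p m n c c'" "config_rectangle_condition m n c"
  shows "config_rectangle_condition m n c'"
proof -
  obtain v where "(topple p m n)\<^sup>*\<^sup>* (add_grain m n v c) c'"
    using assms(1) unfolding chain_step_def stabilises_to_def by blast
  then show ?thesis
    using add_grain_preserves_rectangle_condition[OF assms(2)]
    by induction (auto intro: topple_preserves_rectangle_condition)
qed

lemma chain_steps_preserve_rectangle_condition:
  "(chain_step p m n)\<^sup>*\<^sup>* c c' \<Longrightarrow> config_rectangle_condition m n c \<Longrightarrow>
     config_rectangle_condition m n c'"
  by (induction rule: rtranclp_induct) (auto intro: chain_step_preserves_rectangle_condition)

section \<open>Necessity of the rectangle condition\<close>

definition config_le :: "config \<Rightarrow> config \<Rightarrow> bool" where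
  "config_le d e \<longleftrightarrow> list_all2 (\<le>) (fst d) (fst e) \<and> list_all2 (\<le>) (snd d) (snd e)"

definition grains :: "config \<Rightarrow> nat" where
  "grains c = sum_list (fst c) + sum_list (snd c)"

lemma sum_list_mono_list_all2:
  "list_all2 (\<le>) xs ys \<Longrightarrow> sum_list xs \<le> sum_list ys" for xs ys :: "nat list"
  by (induction rule: list_all2_induct) auto

lemma list_all2_le_increment:
  fixes xs ys :: "nat list"
  assumes "list_all2 (\<le>) xs ys" "xs \<noteq> ys"
  obtains i where "i < length xs" "list_all2 (\<le>) (xs[i := Suc (xs ! i)]) ys"
    "sum_list (xs[i := Suc (xs ! i)]) = Suc (sum_list xs)"
proof -
  have len: "length xs = length ys" and le: "\<forall>i<length xs. xs ! i \<le> ys ! i"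
    using assms(1) by (simp_all add: list_all2_conv_all_nth)
  then obtain i where "i < length xs" "xs ! i \<noteq> ys ! i"
    using assms(2) nth_equalityI by blast
  with le have "xs ! i < ys ! i" by force
  with len le \<open>i < length xs\<close> show ?thesis
    by (intro that[of i]) (auto simp: list_all2_conv_all_nth nth_list_update sum_list_update
        elem_le_sum_list Suc_diff_le)
qed

lemma add_grain_below:
  assumes "config_of m n d" "config_le d e" "d \<noteq> e"
  obtains v where "v < m + n" "config_le (add_grain m n v d) e"
    "grains (add_grain m n v d) = Suc (grains d)"
proof (cases "fst d = fst e")
  case False
  then obtain i where "i < m" "list_all2 (\<le>) ((fst d)[i := Suc (fst d ! i)]) (fst e)"
    "sum_list ((fst d)[i := Suc (fst d ! i)]) = Suc (sum_list (fst d))"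
    using assms(1,2) list_all2_le_increment unfolding config_le_def config_of_def by metis
  then show ?thesis
    using assms(2) by (intro that[of i]) (auto simp: add_grain_def config_le_def grains_def)
next
  case True
  then have "snd d \<noteq> snd e" using assms(3) by (simp add: prod_eq_iff)
  then obtain j where "j < n" "list_all2 (\<le>) ((snd d)[j := Suc (snd d ! j)]) (snd e)"
    "sum_list ((snd d)[j := Suc (snd d ! j)]) = Suc (sum_list (snd d))"
    using assms(1,2) list_all2_le_increment unfolding config_le_def config_of_def by metis
  then show ?thesis
    using assms(2) by (intro that[of "m + j"]) (auto simp: add_grain_def config_le_def grains_def)
qed

lemma stable_config_le:
  assumes "stable_config m n e" "config_le d e"
  shows "stable_config m n d"
  using assms unfolding stable_config_def config_of_def config_le_def
  by (auto simp: list_all2_conv_all_nth) (meson le_less_trans)+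

lemma chain_step_add_grain:
  "stable_config m n d \<Longrightarrow> v < m + n \<Longrightarrow> stable_config m n (add_grain m n v d) \<Longrightarrow>
     chain_step p m n d (add_grain m n v d)"
  unfolding chain_step_def stabilises_to_def by blast

text \<open>No toppling is needed: grains are added one at a time, staying below the stable e.\<close>
lemma chain_steps_upward:
  assumes "stable_config m n e" "config_le d e"
  shows "(chain_step p m n)\<^sup>*\<^sup>* d e"
  using assms(2)
proof (induction "grains e - grains d" arbitrary: d rule: less_induct)
  case less
  show ?case
  proof (cases "d = e")
    case False
    have "stable_config m n d"
      using assms(1) less.prems by (rule stable_config_le)
    then obtain v where v: "v < m + n" "config_le (add_grain m n v d) e"
      "grains (add_grain m n v d) = Suc (grains d)"
      using add_grain_below less.prems False unfolding stable_config_def by metis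
    have "grains (add_grain m n v d) \<le> grains e"
      using v(2) by (simp add: config_le_def grains_def add_mono sum_list_mono_list_all2)
    then have "(chain_step p m n)\<^sup>*\<^sup>* (add_grain m n v d) e"
      using v by (intro less.hyps) auto
    moreover have "chain_step p m n d (add_grain m n v d)"
      using \<open>stable_config m n d\<close> v stable_config_le[OF assms(1)] by (intro chain_step_add_grain)
    ultimately show ?thesis
      by (rule converse_rtranclp_into_rtranclp[rotated])
  qed simp
qed

definition max_stable_config :: "nat \<Rightarrow> nat \<Rightarrow> config" where
  "max_stable_config m n = (replicate m (n - 1), replicate n m)"

lemma stable_max_stable_config: "1 \<le> n \<Longrightarrow> stable_config m n (max_stable_config m n)"
  by (simp add: stable_config_def config_of_def max_stable_config_def)

lemma config_le_max_stable_config: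
  "stable_config m n c \<Longrightarrow> config_le c (max_stable_config m n)"
  by (auto simp: stable_config_def config_of_def config_le_def max_stable_config_def
      list_all2_conv_all_nth less_Suc_eq_le)

lemma rectangle_condition_max_stable_config:
  "config_rectangle_condition m n (max_stable_config m n)"
proof -
  have "(\<Sum>i<m. card Q - (n - 1)) \<le> (\<Sum>j\<in>Q. m)" for Q :: "nat set"
    by (simp add: mult.commute)
  moreover have "(\<Sum>j\<in>Q. replicate n m ! j) = (\<Sum>j\<in>Q. m)" if "Q \<subseteq> {..<n}" for Q
    using that by (intro sum.cong) auto
  ultimately show ?thesis
    by (simp add: config_rectangle_condition_def rectangle_condition_iff_deficit
        max_stable_config_def)
qed

lemma stoch_recurrent_imp_rectangle_condition:
  assumes "1 \<le> n" "stoch_recurrent p m n c"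
  shows "config_rectangle_condition m n c"
proof -
  have "stable_config m n c"
    using assms(2) by (simp add: stoch_recurrent_def)
  then have "(chain_step p m n)\<^sup>*\<^sup>* c (max_stable_config m n)"
    using assms(1)
    by (intro chain_steps_upward stable_max_stable_config config_le_max_stable_config)
  then have "(chain_step p m n)\<^sup>*\<^sup>* (max_stable_config m n) c"
    using assms(2) unfolding stoch_recurrent_def by blast
  then show ?thesis
    using rectangle_condition_max_stable_config by (rule chain_steps_preserve_rectangle_condition)
qed

section \<open>Sufficiency of the rectangle condition\<close>

lemma card_filter_insert:
  "finite I \<Longrightarrow> i \<notin> I \<Longrightarrow>
     card {k\<in>insert i I. P k} = card {k\<in>I. P k} + (if P i then 1 else 0)"
proof -
  assume "finite I" "i \<notin> I"
  moreover have "{k\<in>insert i I. P k} = (if P i then insert i {k\<in>I. P k} else {k\<in>I. P k})"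
    by auto
  ultimately show ?thesis by simp
qed

lemma exists_largest_subset:
  fixes a :: "'a \<Rightarrow> 'b::linorder"
  assumes "finite U"
  shows "r \<le> card U \<Longrightarrow> \<exists>T\<subseteq>U. card T = r \<and> (\<forall>t\<in>T. \<forall>s\<in>U - T. a s \<le> a t)"
proof (induction r)
  case 0
  show ?case by (intro exI[of _ "{}"]) simp
next
  case (Suc r)
  then obtain T where T: "T \<subseteq> U" "card T = r" "\<forall>t\<in>T. \<forall>s\<in>U - T. a s \<le> a t"
    using Suc_leD by blast
  have "finite T"
    using T(1) assms by (rule finite_subset)
  have "\<not> U \<subseteq> T"
    using Suc.prems T(2) card_mono[OF \<open>finite T\<close>, of U] by linarith
  then have "a ` (U - T) \<noteq> {}" and fin: "finite (a ` (U - T))"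
    using assms by auto
  then obtain x where x: "x \<in> U - T" "a x = Max (a ` (U - T))"
    using Max_in[OF fin] by (metis imageE)
  have "a s \<le> a x" if "s \<in> U - T" for s
    using Max_ge[OF fin imageI[OF that]] x(2) by simp
  then have "\<forall>t\<in>insert x T. \<forall>s\<in>U - insert x T. a s \<le> a t"
    using T(3) by blast
  moreover have "insert x T \<subseteq> U" "card (insert x T) = Suc r"
    using x(1) T(1,2) \<open>finite T\<close> by auto
  ultimately show ?case
    by blast
qed

text \<open>If \<open>a t \<le> q\<close> for some t in T, then \<open>a s \<le> q\<close> for all s outside T and the second bound
  applies; otherwise the elements of T contribute nothing to either side.\<close>
lemma deficit_bound_largest_subset:
  fixes a :: "'a \<Rightarrow> nat"
  assumes "finite U" "T \<subseteq> U" and largest: "\<forall>t\<in>T. \<forall>s\<in>U - T. a s \<le> a t"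
    and bound_without: "(\<Sum>i\<in>U. q - a i) \<le> \<beta>"
    and bound_with: "(\<Sum>i\<in>U. Suc q - a i) \<le> \<beta> + card (U - T)"
  shows "(\<Sum>i\<in>U. q + (if i \<in> T then 1 else 0) - a i) \<le> \<beta>"
proof (cases "\<exists>t\<in>T. a t \<le> q")
  case False
  then have "(\<Sum>i\<in>U. q + (if i \<in> T then 1 else 0) - a i) = (\<Sum>i\<in>U. q - a i)"
    by (intro sum.cong) auto
  then show ?thesis
    using bound_without by simp
next
  case True
  then have "a s \<le> q" if "s \<in> U - T" for s
    using largest that by (meson order_trans)
  then have "(\<Sum>i\<in>U. Suc q - a i) =
      (\<Sum>i\<in>U. (q + (if i \<in> T then 1 else 0) - a i) + (if i \<in> T then 0 else 1))"
    by (intro sum.cong) (auto simp: Suc_diff_le)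
  also have "\<dots> = (\<Sum>i\<in>U. q + (if i \<in> T then 1 else 0) - a i) + card (U - T)"
    using assms(1,2) by (simp add: sum.distrib sum.If_cases Diff_eq Int_commute)
  finally show ?thesis
    using bound_with by linarith
qed

lemma rectangle_condition_remove_column:
  assumes "finite U" "finite V" "j \<notin> V" and rc: "rectangle_condition U (insert j V) a b"
    and T: "T \<subseteq> U" "card (U - T) = b j" "\<forall>t\<in>T. \<forall>s\<in>U - T. a s \<le> a t"
  shows "\<forall>i\<in>T. 1 \<le> a i" and "rectangle_condition U V (\<lambda>i. a i - (if i \<in> T then 1 else 0)) b"
proof -
  have deficit: "(\<Sum>i\<in>U. card Q + (if i \<in> T then 1 else 0) - a i) \<le> sum b Q"
    if "Q \<subseteq> V" for Q
  proof (rule deficit_bound_largest_subset[OF assms(1) T(1) T(3)])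
    show "(\<Sum>i\<in>U. card Q - a i) \<le> sum b Q"
      using rc that by (auto simp: rectangle_condition_iff_deficit[OF assms(1)])
    have "finite Q" "j \<notin> Q" "insert j Q \<subseteq> insert j V"
      using that assms(2,3) finite_subset by auto
    moreover have "(\<Sum>i\<in>U. card (insert j Q) - a i) \<le> sum b (insert j Q)"
      using rc \<open>insert j Q \<subseteq> insert j V\<close>
      unfolding rectangle_condition_iff_deficit[OF assms(1)] by blast
    ultimately show "(\<Sum>i\<in>U. Suc (card Q) - a i) \<le> sum b Q + card (U - T)"
      using T(2) by (simp add: add.commute)
  qed
  have pos: "\<forall>i\<in>U. (if i \<in> T then 1 else 0) \<le> a i"
    using deficit[of "{}"] assms(1) by (simp add: sum_eq_0_iff)
  show a_pos: "\<forall>i\<in>T. 1 \<le> a i"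
  proof
    fix i assume "i \<in> T"
    then have "(if i \<in> T then 1 else 0) \<le> a i"
      using pos T(1) by blast
    with \<open>i \<in> T\<close> show "1 \<le> a i" by simp
  qed
  have "(\<Sum>i\<in>U. card Q - (a i - (if i \<in> T then 1 else 0))) =
      (\<Sum>i\<in>U. card Q + (if i \<in> T then 1 else 0) - a i)" for Q :: "'b set"
    using a_pos by (intro sum.cong) auto
  then show "rectangle_condition U V (\<lambda>i. a i - (if i \<in> T then 1 else 0)) b"
    using deficit by (simp add: rectangle_condition_iff_deficit[OF assms(1)])
qed

text \<open>Gale-Ryser, greedily column by column: bottom j is joined to the \<open>card U - b j\<close> tops
  of largest remaining capacity.\<close>
lemma rectangle_condition_imp_relation:
  assumes "finite U" "finite V"
  shows "rectangle_condition U V a b \<Longrightarrow> \<forall>j\<in>V. b j \<le> card U \<Longrightarrow>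
    \<exists>M. (\<forall>i\<in>U. card {j\<in>V. M i j} \<le> a i) \<and> (\<forall>j\<in>V. card U - card {i\<in>U. M i j} \<le> b j)"
  using assms(2)
proof (induction V arbitrary: a rule: finite_induct)
  case empty
  show ?case by simp
next
  case (insert j V)
  obtain T where T: "T \<subseteq> U" "card T = card U - b j" "\<forall>t\<in>T. \<forall>s\<in>U - T. a s \<le> a t"
    using exists_largest_subset[OF assms(1), of "card U - b j" a] by auto
  have "card (U - T) = b j"
    using T(1,2) insert.prems(2) assms(1) by (simp add: card_Diff_subset finite_subset)
  define a' where "a' i = a i - (if i \<in> T then 1 else 0)" for i
  have "\<forall>i\<in>T. 1 \<le> a i" "rectangle_condition U V a' b"
    using rectangle_condition_remove_column[OF assms(1) insert.hyps insert.prems(1)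
        T(1) \<open>card (U - T) = b j\<close> T(3)]
    unfolding a'_def by blast+
  then obtain M' where M': "\<forall>i\<in>U. card {l\<in>V. M' i l} \<le> a' i"
    "\<forall>l\<in>V. card U - card {i\<in>U. M' i l} \<le> b l"
    using insert.IH[of a'] insert.prems(2) by blast
  define M where "M i l = (if l = j then i \<in> T else M' i l)" for i l
  show ?case
  proof (intro exI[of _ M] conjI ballI)
    fix i assume "i \<in> U"
    have "{l\<in>V. M i l} = {l\<in>V. M' i l}"
      using insert.hyps(2) by (auto simp: M_def)
    then have "card {l\<in>insert j V. M i l} = card {l\<in>V. M' i l} + (if i \<in> T then 1 else 0)"
      using card_filter_insert[OF insert.hyps, of "M i"] by (simp add: M_def)
    then show "card {l\<in>insert j V. M i l} \<le> a i"
      using M'(1) \<open>i \<in> U\<close> \<open>\<forall>i\<in>T. 1 \<le> a i\<close> by (fastforce simp: a'_def)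
  next
    fix l assume "l \<in> insert j V"
    moreover have "{i\<in>U. M i j} = T"
      using T(1) by (auto simp: M_def)
    ultimately show "card U - card {i\<in>U. M i l} \<le> b l"
      using M'(2) T(2) insert.prems(2) by (cases "l = j") (simp_all add: M_def)
  qed
qed

definition mk_config :: "nat \<Rightarrow> nat \<Rightarrow> (nat \<Rightarrow> nat) \<Rightarrow> (nat \<Rightarrow> nat) \<Rightarrow> config" where
  "mk_config m n f g = (map f [0..<m], map g [0..<n])"

lemma mk_config_cong:
  "(\<And>i. i < m \<Longrightarrow> f i = f' i) \<Longrightarrow> (\<And>j. j < n \<Longrightarrow> g j = g' j) \<Longrightarrow>
     mk_config m n f g = mk_config m n f' g'"
  unfolding mk_config_def by simp

lemma topple_top_mk_config:
  assumes "0 < p" "p < 1" "i < m" "n \<le> f i" "S \<subseteq> {..<n}"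
  shows "topple p m n (mk_config m n f g)
           (mk_config m n (f(i := f i - card S)) (\<lambda>j. if j \<in> S then g j + 1 else g j))"
  unfolding topple_def topple_top_def
  using assms by (intro disjI1 conjI exI[of _ i] exI[of _ S])
    (auto simp: mk_config_def config_of_def)

lemma topple_bot_mk_config:
  assumes "0 < p" "p < 1" "j < n" "m + 1 \<le> g j" "S \<subseteq> {..<m}"
  shows "topple p m n (mk_config m n f g)
           (mk_config m n (\<lambda>i. if i \<in> S then f i + 1 else f i)
              (g(j := g j - (card S + (if s then 1 else 0)))))"
  unfolding topple_def topple_bot_def Let_def
  using assms by (intro disjI2 conjI exI[of _ j] exI[of _ S] exI[of _ s])
    (auto simp: mk_config_def config_of_def)

lemma tops_topple:
  assumes "0 < p" "p < 1"
  shows "finite I \<Longrightarrow> I \<subseteq> {..<m} \<Longrightarrow> \<forall>i\<in>I. n \<le> f i \<Longrightarrow> \<forall>i\<in>I. S i \<subseteq> {..<n} \<Longrightarrow>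
    (topple p m n)\<^sup>*\<^sup>* (mk_config m n f g)
      (mk_config m n (\<lambda>i. if i \<in> I then f i - card (S i) else f i)
         (\<lambda>j. g j + card {i\<in>I. j \<in> S i}))"
proof (induction I rule: finite_induct)
  case empty
  show ?case by simp
next
  case (insert i I)
  let ?f = "\<lambda>k. if k \<in> I then f k - card (S k) else f k"
  let ?g = "\<lambda>j. g j + card {k\<in>I. j \<in> S k}"
  have topple_i: "topple p m n (mk_config m n ?f ?g)
      (mk_config m n (?f(i := ?f i - card (S i))) (\<lambda>j. if j \<in> S i then ?g j + 1 else ?g j))"
    using insert.prems insert.hyps(2) by (intro topple_top_mk_config[OF assms]) auto
  have eq: "mk_config m n (?f(i := ?f i - card (S i))) (\<lambda>j. if j \<in> S i then ?g j + 1 else ?g j) =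
      mk_config m n (\<lambda>k. if k \<in> insert i I then f k - card (S k) else f k)
        (\<lambda>j. g j + card {k\<in>insert i I. j \<in> S k})"
  proof (rule mk_config_cong)
    fix k
    show "(?f(i := ?f i - card (S i))) k = (if k \<in> insert i I then f k - card (S k) else f k)"
      using insert.hyps by auto
  next
    fix j
    show "(if j \<in> S i then ?g j + 1 else ?g j) = g j + card {k\<in>insert i I. j \<in> S k}"
      by (simp only: card_filter_insert[OF insert.hyps]) simp
  qed
  have "(topple p m n)\<^sup>*\<^sup>* (mk_config m n f g) (mk_config m n ?f ?g)"
    using insert by simp
  then have "(topple p m n)\<^sup>*\<^sup>* (mk_config m n f g)
      (mk_config m n (?f(i := ?f i - card (S i))) (\<lambda>j. if j \<in> S i then ?g j + 1 else ?g j))"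
    using topple_i by (rule rtranclp.rtrancl_into_rtrancl)
  then show ?case
    unfolding eq .
qed

lemma bottom_sheds:
  assumes "0 < p" "p < 1" "j < n" "R \<subseteq> {..<m}"
  shows "m + 1 \<le> g j \<Longrightarrow> (topple p m n)\<^sup>*\<^sup>* (mk_config m n f g)
    (mk_config m n (\<lambda>i. if i \<in> R then f i + 1 else f i) (g(j := m - card R)))"
proof (induction "g j - (m + 1)" arbitrary: g)
  case 0
  then have "g j = m + 1" by simp
  have "topple p m n (mk_config m n f g)
      (mk_config m n (\<lambda>i. if i \<in> R then f i + 1 else f i) (g(j := m - card R)))"
    using topple_bot_mk_config[OF assms(1-3) _ assms(4), where g = g and f = f and s = True]
      \<open>g j = m + 1\<close> by simp
  then show ?case
    by (rule r_into_rtranclp)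
next
  case (Suc k)
  have "topple p m n (mk_config m n f g) (mk_config m n f (g(j := g j - 1)))"
    using topple_bot_mk_config[where g = g and f = f and s = True,
        OF assms(1-3) Suc.prems empty_subsetI]
    by simp
  moreover have "(topple p m n)\<^sup>*\<^sup>* (mk_config m n f (g(j := g j - 1)))
      (mk_config m n (\<lambda>i. if i \<in> R then f i + 1 else f i) (g(j := m - card R)))"
    using Suc.hyps(1)[of "g(j := g j - 1)"] Suc.hyps(2) by simp
  ultimately show ?case
    by (rule converse_rtranclp_into_rtranclp)
qed

lemma bottoms_topple:
  assumes "0 < p" "p < 1"
  shows "finite J \<Longrightarrow> J \<subseteq> {..<n} \<Longrightarrow> \<forall>j\<in>J. m + 1 \<le> g j \<Longrightarrow> \<forall>j\<in>J. R j \<subseteq> {..<m} \<Longrightarrow>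
    (topple p m n)\<^sup>*\<^sup>* (mk_config m n f g)
      (mk_config m n (\<lambda>i. f i + card {j\<in>J. i \<in> R j})
         (\<lambda>j. if j \<in> J then m - card (R j) else g j))"
proof (induction J rule: finite_induct)
  case empty
  show ?case by simp
next
  case (insert j J)
  let ?f = "\<lambda>i. f i + card {k\<in>J. i \<in> R k}"
  let ?g = "\<lambda>l. if l \<in> J then m - card (R l) else g l"
  have shed: "(topple p m n)\<^sup>*\<^sup>* (mk_config m n ?f ?g)
      (mk_config m n (\<lambda>i. if i \<in> R j then ?f i + 1 else ?f i) (?g(j := m - card (R j))))"
    using insert.prems insert.hyps(2) by (intro bottom_sheds[OF assms]) auto
  have eq: "mk_config m n (\<lambda>i. if i \<in> R j then ?f i + 1 else ?f i) (?g(j := m - card (R j))) =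
      mk_config m n (\<lambda>i. f i + card {k\<in>insert j J. i \<in> R k})
        (\<lambda>l. if l \<in> insert j J then m - card (R l) else g l)"
  proof (rule mk_config_cong)
    fix i
    show "(if i \<in> R j then ?f i + 1 else ?f i) = f i + card {k\<in>insert j J. i \<in> R k}"
      by (simp only: card_filter_insert[OF insert.hyps]) simp
  next
    fix l
    show "(?g(j := m - card (R j))) l = (if l \<in> insert j J then m - card (R l) else g l)"
      by auto
  qed
  have "(topple p m n)\<^sup>*\<^sup>* (mk_config m n f g) (mk_config m n ?f ?g)"
    using insert by simp
  then have "(topple p m n)\<^sup>*\<^sup>* (mk_config m n f g)
      (mk_config m n (\<lambda>i. if i \<in> R j then ?f i + 1 else ?f i) (?g(j := m - card (R j))))"
    using shed by (rule rtranclp_trans)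
  then show ?case
    unfolding eq .
qed
definition relation_config :: "nat \<Rightarrow> nat \<Rightarrow> (nat \<Rightarrow> nat \<Rightarrow> bool) \<Rightarrow> config" where
  "relation_config m n M =
     mk_config m n (\<lambda>i. card {j\<in>{..<n}. M i j}) (\<lambda>j. m - card {i\<in>{..<m}. M i j})"

text \<open>The three stages of the avalanche from the maximal stable configuration that ends in
  \<open>relation_config m n M\<close>: the grain added at bottom 0 is sent to every top; each top then
  sends a grain to every bottom except, if \<open>M i 0\<close>, bottom 0; finally every other bottom j
  drains to \<open>m + 1\<close> grains through the sink and sends its last toppling to the tops i with
  \<open>M i j\<close>.\<close>
lemma avalanche_stage1:
  assumes "0 < p" "p < 1" "1 \<le> n"
  shows "(topple p m n)\<^sup>*\<^sup>* (add_grain m n m (max_stable_config m n))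
           (mk_config m n (\<lambda>_. n) (\<lambda>j. if j = 0 then 0 else m))"
proof -
  have "add_grain m n m (max_stable_config m n) =
      mk_config m n (\<lambda>_. n - 1) (\<lambda>j. if j = 0 then m + 1 else m)"
    unfolding add_grain_def max_stable_config_def mk_config_def using assms(3)
    by (auto intro!: nth_equalityI simp: nth_list_update)
  moreover have "mk_config m n (\<lambda>_. n) (\<lambda>j. if j = 0 then 0 else m) =
      mk_config m n (\<lambda>i. if i \<in> {..<m} then n - 1 + 1 else n - 1)
        ((\<lambda>j. if j = 0 then m + 1 else m)(0 := m - card {..<m}))"
    using assms(3) by (intro mk_config_cong) auto
  ultimately show ?thesis
    using assms(3) by (simp only:) (intro bottom_sheds[OF assms(1,2)], auto)
qed

lemma avalanche_stage2:
  assumes "0 < p" "p < 1" "1 \<le> n"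
  shows "(topple p m n)\<^sup>*\<^sup>* (mk_config m n (\<lambda>_. n) (\<lambda>j. if j = 0 then 0 else m))
           (mk_config m n (\<lambda>i. if M i 0 then 1 else 0)
              (\<lambda>j. if j = 0 then card {i\<in>{..<m}. \<not> M i 0} else m + m))"
proof -
  define S where "S i = {j\<in>{..<n}. j \<noteq> 0 \<or> \<not> M i 0}" for i
  have "mk_config m n (\<lambda>i. if M i 0 then 1 else 0)
      (\<lambda>j. if j = 0 then card {i\<in>{..<m}. \<not> M i 0} else m + m) =
    mk_config m n (\<lambda>i. if i \<in> {..<m} then n - card (S i) else n)
      (\<lambda>j. (if j = 0 then 0 else m) + card {i\<in>{..<m}. j \<in> S i})"
  proof (rule mk_config_cong)
    fix i
    have "S i = (if M i 0 then {..<n} - {0} else {..<n})"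
      by (auto simp: S_def)
    then show "(if M i 0 then 1 else 0) = (if i \<in> {..<m} then n - card (S i) else n)" if "i < m"
      using that assms(3) by simp
  next
    fix j
    show "(if j = 0 then card {i\<in>{..<m}. \<not> M i 0} else m + m) =
        (if j = 0 then 0 else m) + card {i\<in>{..<m}. j \<in> S i}" if "j < n"
      using that by (auto simp: S_def)
  qed
  then show ?thesis
    by (simp only:) (intro tops_topple[OF assms(1,2)], auto simp: S_def)
qed

lemma avalanche_stage3:
  assumes "0 < p" "p < 1" "1 \<le> m" "1 \<le> n"
  shows "(topple p m n)\<^sup>*\<^sup>* (mk_config m n (\<lambda>i. if M i 0 then 1 else 0)
              (\<lambda>j. if j = 0 then card {i\<in>{..<m}. \<not> M i 0} else m + m))
           (relation_config m n M)"
proof -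
  define R where "R j = {i\<in>{..<m}. M i j}" for j
  have "relation_config m n M = mk_config m n
      (\<lambda>i. (if M i 0 then 1 else 0) + card {j\<in>{1..<n}. i \<in> R j})
      (\<lambda>j. if j \<in> {1..<n} then m - card (R j)
            else if j = 0 then card {i\<in>{..<m}. \<not> M i 0} else m + m)"
    unfolding relation_config_def
  proof (rule mk_config_cong)
    fix i
    have "{..<n} = insert 0 {1..<n}"
      using assms(4) by auto
    then show "card {j\<in>{..<n}. M i j} = (if M i 0 then 1 else 0) + card {j\<in>{1..<n}. i \<in> R j}"
      if "i < m"
      using that card_filter_insert[of "{1..<n}" 0 "M i"] by (simp add: R_def)
  next
    fix j
    have "{i\<in>{..<m}. \<not> M i 0} = {..<m} - {i\<in>{..<m}. M i 0}"
      by auto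
    then have "card {i\<in>{..<m}. \<not> M i 0} = m - card {i\<in>{..<m}. M i 0}"
      using card_Diff_subset[of "{i\<in>{..<m}. M i 0}" "{..<m}"] by auto
    then show "m - card {i\<in>{..<m}. M i j} = (if j \<in> {1..<n} then m - card (R j)
        else if j = 0 then card {i\<in>{..<m}. \<not> M i 0} else m + m)"
      if "j < n"
      using that by (cases "j = 0") (auto simp: R_def)
  qed
  then show ?thesis
    using assms(3) by (simp only:) (intro bottoms_topple[OF assms(1,2)], auto simp: R_def)
qed

lemma max_stable_config_avalanche:
  assumes "0 < p" "p < 1" "1 \<le> m" "1 \<le> n"
  shows "(topple p m n)\<^sup>*\<^sup>* (add_grain m n m (max_stable_config m n)) (relation_config m n M)"
  using avalanche_stage1[OF assms(1,2,4), of m] avalanche_stage2[OF assms(1,2,4), of m M]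
    avalanche_stage3[OF assms] by (meson rtranclp_trans)

lemma chain_steps_stable:
  "(chain_step p m n)\<^sup>*\<^sup>* c d \<Longrightarrow> stable_config m n c \<Longrightarrow> stable_config m n d"
  by (induction rule: rtranclp_induct) (auto simp: chain_step_def stabilises_to_def)

lemma max_stable_config_reaches_relation_config:
  assumes "0 < p" "p < 1" "1 \<le> n" "stable_config m n (relation_config m n M)"
  shows "(chain_step p m n)\<^sup>*\<^sup>* (max_stable_config m n) (relation_config m n M)"
proof (cases "m = 0")
  case True
  then have "max_stable_config m n = relation_config m n M"
    by (simp add: max_stable_config_def relation_config_def mk_config_def map_replicate_const)
  then show ?thesis by simp
next
  case False
  then have "chain_step p m n (max_stable_config m n) (relation_config m n M)"
    unfolding chain_step_def stabilises_to_def
    using assms max_stable_config_avalanche[OF assms(1,2) _ assms(3)] stable_max_stable_config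
    by (intro conjI exI[of _ m]) auto
  then show ?thesis by simp
qed

lemma rectangle_condition_imp_stoch_recurrent:
  assumes "0 < p" "p < 1" "1 \<le> n" "stable_config m n c" "config_rectangle_condition m n c"
  shows "stoch_recurrent p m n c"
proof -
  have "\<forall>j\<in>{..<n}. snd c ! j \<le> card {..<m}"
    using assms(4) by (simp add: stable_config_def less_Suc_eq_le)
  then obtain M where rows: "\<forall>i\<in>{..<m}. card {j\<in>{..<n}. M i j} \<le> fst c ! i"
    and cols: "\<forall>j\<in>{..<n}. card {..<m} - card {i\<in>{..<m}. M i j} \<le> snd c ! j"
    using rectangle_condition_imp_relation[of "{..<m}" "{..<n}"] assms(5)
    unfolding config_rectangle_condition_def by blast
  have "config_le (relation_config m n M) c"
    using assms(4) rows cols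
    by (auto simp: config_le_def relation_config_def mk_config_def stable_config_def config_of_def
        list_all2_conv_all_nth)
  then have "stable_config m n (relation_config m n M)"
    using assms(4) by (rule stable_config_le[rotated])
  show ?thesis
    unfolding stoch_recurrent_def
  proof (intro conjI allI impI)
    fix d assume "(chain_step p m n)\<^sup>*\<^sup>* c d"
    then have "stable_config m n d"
      using assms(4) by (rule chain_steps_stable)
    then have "(chain_step p m n)\<^sup>*\<^sup>* d (max_stable_config m n)"
      using assms(3)
      by (intro chain_steps_upward stable_max_stable_config config_le_max_stable_config)
    also have "(chain_step p m n)\<^sup>*\<^sup>* \<dots> (relation_config m n M)"
      using assms(1-3) \<open>stable_config m n (relation_config m n M)\<close>
      by (rule max_stable_config_reaches_relation_config)
    also have "(chain_step p m n)\<^sup>*\<^sup>* \<dots> c"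
      using assms(4) \<open>config_le (relation_config m n M) c\<close> by (rule chain_steps_upward)
    finally show "(chain_step p m n)\<^sup>*\<^sup>* d c" .
  qed (fact assms(4))
qed

lemma stoch_recurrent_iff_rectangle_condition:
  assumes "0 < p" "p < 1" "1 \<le> n" "stable_config m n c"
  shows "stoch_recurrent p m n c \<longleftrightarrow> config_rectangle_condition m n c"
  using assms rectangle_condition_imp_stoch_recurrent stoch_recurrent_imp_rectangle_condition
  by blast

theorem theorem2p5:
  fixes p :: real
  assumes "0 < p" and "p < 1"
  shows "(\<forall>m n c. 1 \<le> n \<and> stable_config m n c \<longrightarrow>
            (fst (ssm_algorithm m n c) \<longleftrightarrow> stoch_recurrent p m n c))
       \<and> (\<exists>C::nat. \<forall>m n c. 1 \<le> n \<and> stable_config m n c \<longrightarrow>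
            snd (ssm_algorithm m n c) \<le> C * (m + n))"
proof (intro conjI exI[of _ 8] allI impI)
  fix m n c assume "1 \<le> n \<and> stable_config m n c"
  then show "fst (ssm_algorithm m n c) \<longleftrightarrow> stoch_recurrent p m n c"
    using assms ssm_algorithm_iff_rectangle_condition stoch_recurrent_iff_rectangle_condition
    by blast
next
  fix m n c assume "1 \<le> n \<and> stable_config m n c"
  then show "snd (ssm_algorithm m n c) \<le> 8 * (m + n)"
    using snd_ssm_algorithm_le[of m n c] by auto
qed

end
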